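(* Consider $n$ agents on a directed graph $G=(\mathcal{V},\mathcal{E})$ with up to $f$ Byzantine agents, hypothesis set $\Theta$ and true state $\theta^*$ as in the context. Suppose that every $1$-dimensional reduced graph of $G$ contains exactly one source component, and that for every $\theta\neq\theta^*$ and every $1$-dimensional reduced graph $\mathcal{H}_1$ of $G$ with source component $\mathcal{S}_{\mathcal{H}_1}$, $$\sum_{j\in\mathcal{S}_{\mathcal{H}_1}}D\big(\ell_j(\cdot\mid\theta^* )\,\|\,\ell_j(\cdot\mid\theta)\big)\neq0 .$$ If all non-faulty agents run Pairwise Learning, then for every non-faulty agent $i$ and every $\theta\neq\theta^*$, $r_t^i(\theta^*,\theta)\to+\infty$ and $r_t^i(\theta,\theta^* )\to-\infty$ almost surely as $t\to\infty$.
   Context: Network: $\mathcal{V}=\{1,\dots,n\}$, $\mathcal{I}_i$ the incoming neighbors of $i$; synchronous iterations $t=1,2,\dots$. An unknown set $\mathcal{F}$ of at most $f$ agents is Byzantine (arbitrary behavior, possibly inconsistent messages, full knowledge, collusion); non-faulty agents know $f$; missing messages are replaced by a default value. Observations: $\Theta=\{\theta_1,\dots,\theta_m\}$; agent $i$ has finite signal space $\mathcal{S}_i$ and likelihoods $\ell_i(\cdot\mid\theta)$ with $\ell_i(w\mid\theta)>0$ for all $w,\theta$; in iteration $t$ it observes $s_t^i\sim\ell_i(\cdot\mid\theta^* )$, independently across agents and iterations; $\ell_i(s_{1,t}^i\mid\theta)=\prod_{r=1}^t\ell_i(s_r^i\mid\theta)$. $D$ is the Kullback–Leibler divergence $D(p\|q)=\sum_wp(w)\log\frac{p(w)}{q(w)}$.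 A $1$-dimensional reduced graph of $G$ is obtained by removing all faulty nodes and their incident links and then, for each non-faulty node, removing up to $f$ additional incoming links (for any possible faulty set of size at most $f$). A source component is a strongly connected component with no incoming links from outside it. Pairwise Learning at non-faulty agent $i$: initialize $r_0^i(\theta_1,\theta_2)=0$ for all ordered pairs $\theta_1\neq\theta_2$ in $\Theta$. In iteration $t\ge1$, for each ordered pair $(\theta_1,\theta_2)$, $\theta_1\ne\theta_2$: transmit $r_{t-1}^i(\theta_1,\theta_2)$ on all outgoing links; observe $s_t^i$ and receive values $\tilde r_{t-1}^j(\theta_1,\theta_2)$ from all $j\in\mathcal{I}_i$; sort the received values, remove the $f$ smallest and the $f$ largest, and let $\mathcal{I}_i^*[t]$ be the indices of the remaining neighbors; set $$r_t^i(\theta_1,\theta_2)=\frac{\sum_{j\in\mathcal{I}_i^*[t]}\tilde r_{t-1}^j(\theta_1,\theta_2)+r_{t-1}^i(\theta_1,\theta_2)}{|\mathcal{I}_i^*[t]|+1}+\log\frac{\ell_i(s_{1,t}^i\mid\theta_1)}{\ell_i(s_{1,t}^i\mid\theta_2)} .$$ *)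

theory Defs
  imports "HOL-Probability.Probability"
begin

definition in_nbrs :: "(nat \<times> nat) set \<Rightarrow> nat \<Rightarrow> nat set" where
  "in_nbrs E i = {j. (j, i) \<in> E}"

definition reduced_graph1 ::
  "nat set \<Rightarrow> (nat \<times> nat) set \<Rightarrow> nat \<Rightarrow> nat set \<Rightarrow> (nat \<times> nat) set \<Rightarrow> bool" where
  "reduced_graph1 V E f N EH \<longleftrightarrow>
     (\<exists>F'. F' \<subseteq> V \<and> card F' \<le> f \<and> N = V - F' \<and>
        EH \<subseteq> E \<inter> (N \<times> N) \<and>
        (\<forall>i\<in>N. card {j \<in> N. (j, i) \<in> E \<and> (j, i) \<notin> EH} \<le> f))"

definition strongly_connected_component ::
  "nat set \<Rightarrow> (nat \<times> nat) set \<Rightarrow> nat set \<Rightarrow> bool" where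
  "strongly_connected_component N EH S \<longleftrightarrow>
     S \<noteq> {} \<and> S \<subseteq> N \<and>
     (\<forall>u\<in>S. \<forall>v\<in>S. (u, v) \<in> EH\<^sup>*) \<and>
     (\<forall>w\<in>N. \<forall>u\<in>S. (u, w) \<in> EH\<^sup>* \<and> (w, u) \<in> EH\<^sup>* \<longrightarrow> w \<in> S)"

definition source_component ::
  "nat set \<Rightarrow> (nat \<times> nat) set \<Rightarrow> nat set \<Rightarrow> bool" where
  "source_component N EH S \<longleftrightarrow>
     strongly_connected_component N EH S \<and>
     (\<forall>u v. (u, v) \<in> EH \<and> v \<in> S \<longrightarrow> u \<in> S)"

definition KL :: "'s set \<Rightarrow> ('s \<Rightarrow> real) \<Rightarrow> ('s \<Rightarrow> real) \<Rightarrow> real" where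
  "KL S p q = (\<Sum>w\<in>S. p w * ln (p w / q w))"

definition trim :: "nat \<Rightarrow> real list \<Rightarrow> real list" where
  "trim f xs = take (length xs - 2 * f) (drop f (sort xs))"

text \<open>pl E F f adv L t i a b is the value r_t^i(a,b).
  adv t j i a b: value received by agent i from a faulty agent j in iteration t
  (purporting to be r_{t-1}^j(a,b)); arbitrary, possibly receiver dependent.
  L t i a b: log (l_i(s_{1,t}^i | a) / l_i(s_{1,t}^i | b)).\<close>
fun pl :: "(nat \<times> nat) set \<Rightarrow> nat set \<Rightarrow> nat \<Rightarrow>
    (nat \<Rightarrow> nat \<Rightarrow> nat \<Rightarrow> 'h \<Rightarrow> 'h \<Rightarrow> real) \<Rightarrow>
    (nat \<Rightarrow> nat \<Rightarrow> 'h \<Rightarrow> 'h \<Rightarrow> real) \<Rightarrow> nat \<Rightarrow> nat \<Rightarrow> 'h \<Rightarrow> 'h \<Rightarrow> real" where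
  "pl E F f adv L 0 i a b = 0"
| "pl E F f adv L (Suc t) i a b =
     (let received = map (\<lambda>j. if j \<in> F then adv (Suc t) j i a b else pl E F f adv L t j a b)
                         (sorted_list_of_set (in_nbrs E i));
          kept = trim f received
      in (sum_list kept + pl E F f adv L t i a b) / (real (length kept) + 1)
         + L (Suc t) i a b)"

end

theory Submission
  imports Defs
begin

text \<open>Fix a wrong hypothesis \<theta>. The signal term of agent j, the log-likelihood ratio of
  \<theta>s against \<theta> after t observations, is a sum of t independent bounded variables with mean
  D_j, the divergence of agent j; by Hoeffding's inequality and Borel-Cantelli it grows like
  t D_j almost surely. Identifiability, applied to suitable reduced graphs, makes the
  non-faulty agents robust enough for trimmed means: every agent with at most 2f in-neighbours
  has D_j > 0, and every nonempty set of non-faulty agents with D_j = 0 contains an agent with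
  f + 1 non-faulty in-neighbours outside the set. Since the trimmed values of a non-faulty
  agent are bracketed by non-faulty values, the linear growth of the informative agents spreads
  through the network within n iterations, while the others lose only a small linear drift; so
  the minimum of r_t over the non-faulty agents rises by a fixed amount every n iterations.
  Exchanging \<theta>s and \<theta> negates r_t, which gives the limit at -\<infinity>.\<close>

section \<open>Trimmed means\<close>

lemma length_trim: "length (trim f xs) = length xs - 2 * f"
  unfolding trim_def by simp

lemma in_set_trimD:
  assumes "x \<in> set (trim f xs)"
  obtains p where "f \<le> p" "p < length xs - f" "x = sort xs ! p"
proof -
  obtain q where "q < length (trim f xs)" "x = trim f xs ! q"
    using assms by (metis in_set_conv_nth)
  then show ?thesis
    using that[of "f + q"] unfolding trim_def by auto
qed

lemma length_filter_sort: "length (filter P (sort xs)) = length (filter P xs)"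
  by (metis mset_filter mset_sort size_mset)

lemma trim_ge_if_few_less:
  fixes xs :: "real list"
  assumes few: "length (filter (\<lambda>x. x < m) xs) \<le> f" and x: "x \<in> set (trim f xs)"
  shows "m \<le> x"
proof (rule ccontr)
  assume "\<not> m \<le> x"
  obtain p where p: "f \<le> p" "p < length xs - f" "x = sort xs ! p"
    using in_set_trimD[OF x] .
  have "sort xs ! q < m" if "q \<le> p" for q
    using sorted_nth_mono[OF sorted_sort[of xs] that] p \<open>\<not> m \<le> x\<close> by fastforce
  then have "{0..p} \<subseteq> {q. q < length (sort xs) \<and> sort xs ! q < m}"
    using p by auto
  then have "card {0..p} \<le> card {q. q < length (sort xs) \<and> sort xs ! q < m}"
    by (intro card_mono) auto
  then have "card {0..p} \<le> length (filter (\<lambda>x. x < m) (sort xs))"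
    by (simp add: length_filter_conv_card)
  then show False
    using few p by (simp add: length_filter_sort)
qed

lemma ex_trim_ge_if_many_ge:
  fixes xs :: "real list"
  assumes many: "f + 1 \<le> length (filter (\<lambda>x. a \<le> x) xs)" and long: "2 * f < length xs"
  shows "\<exists>x\<in>set (trim f xs). a \<le> x"
proof -
  let ?d = "length xs"
  \<comment> \<open>the largest value that survives trimming\<close>
  have top: "trim f xs ! (?d - 2 * f - 1) = sort xs ! (?d - f - 1)"
    unfolding trim_def using long by (simp add: algebra_simps)
  have "a \<le> sort xs ! (?d - f - 1)"
  proof (rule ccontr)
    assume "\<not> ?thesis"
    then have "sort xs ! q < a" if "q < ?d - f" for q
      using sorted_nth_mono[OF sorted_sort[of xs], of q "?d - f - 1"] that long by fastforce
    then have "{q. q < length (sort xs) \<and> a \<le> sort xs ! q} \<subseteq> {?d - f..<?d}"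
      by (auto simp: not_less[symmetric])
    then have "card {q. q < length (sort xs) \<and> a \<le> sort xs ! q} \<le> card {?d - f..<?d}"
      by (intro card_mono) auto
    then have "length (filter (\<lambda>x. a \<le> x) (sort xs)) \<le> f"
      by (simp add: length_filter_conv_card)
    then show False
      using many by (simp add: length_filter_sort)
  qed
  moreover have "?d - 2 * f - 1 < length (trim f xs)"
    using long by (simp add: length_trim)
  ultimately show ?thesis
    using top by (metis nth_mem)
qed

lemma length_mult_le_sum_list:
  fixes xs :: "real list"
  assumes "\<forall>x\<in>set xs. m \<le> x"
  shows "real (length xs) * m \<le> sum_list xs"
  using assms by (induction xs) (auto simp: algebra_simps)

lemma length_mult_add_le_sum_list:
  fixes xs :: "real list"
  assumes "\<forall>x\<in>set xs. m \<le> x" and "y \<in> set xs" and "m + h \<le> y"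
  shows "real (length xs) * m + h \<le> sum_list xs"
  using assms
proof (induction xs)
  case (Cons z zs)
  show ?case
  proof (cases "y = z")
    case True
    then show ?thesis
      using Cons.prems length_mult_le_sum_list[of zs m] by (simp add: algebra_simps)
  next
    case False
    then show ?thesis
      using Cons by (simp add: algebra_simps)
  qed
qed simp

lemma sort_map_uminus: "sort (map uminus (xs :: real list)) = map uminus (rev (sort xs))"
proof (rule properties_for_sort)
  show "mset (map uminus (rev (sort xs))) = mset (map uminus xs)"
    by simp
  show "sorted (map uminus (rev (sort xs)))"
    by (simp add: sorted_map sorted_rev_iff_nth_mono sorted_iff_nth_mono rev_nth)
      (auto intro: sorted_nth_mono)
qed

lemma trim_map_uminus: "trim f (map uminus (xs :: real list)) = map uminus (rev (trim f xs))"
proof -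
  define ys where "ys = sort xs"
  define d where "d = length xs"
  have "take (d - 2 * f) (drop f (rev ys)) = rev (take (d - 2 * f) (drop f ys))"
  proof (cases "2 * f \<le> d")
    case True
    have "take (d - 2 * f) (drop f (rev ys)) = rev (drop f (take (d - f) ys))"
      using True by (simp add: ys_def d_def drop_rev take_rev)
    also have "drop f (take (d - f) ys) = take (d - 2 * f) (drop f ys)"
      using True by (simp add: take_drop)
    finally show ?thesis .
  qed simp
  then show ?thesis
    unfolding trim_def sort_map_uminus ys_def d_def by (simp add: take_map drop_map)
qed

lemma sum_list_trim_uminus: "sum_list (trim f (map uminus (xs :: real list))) = - sum_list (trim f xs)"
  using uminus_sum_list_map[of id "trim f xs"] by (simp add: trim_map_uminus rev_map[symmetric] sum_list_rev)

section \<open>One iteration of Pairwise Learning\<close>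

lemma le_average_if_gain:
  fixes m h s :: real and k n :: nat
  assumes "real k * m + h \<le> s - m" and "0 \<le> h" and "k + 1 \<le> n"
  shows "m + h / real n \<le> s / (real k + 1)"
proof -
  have "m + h / real n \<le> m + h / real (k + 1)"
    using assms by (simp add: divide_left_mono)
  also have "\<dots> = (m * (real k + 1) + h) / (real k + 1)"
    by (simp add: field_simps)
  also have "\<dots> \<le> s / (real k + 1)"
    using assms(1) by (intro divide_right_mono) (auto simp: algebra_simps)
  finally show ?thesis .
qed

text \<open>If all non-faulty values are at least m, at most f received values (the faulty ones) lie
  below m, so all values kept after trimming are at least m. The update then gains h/n over m
  (besides the signal term) if the own value exceeds m + h, or if f + 1 non-faulty
  in-neighbours do: at most f of those are trimmed from above.\<close>
lemma pl_Suc_lower_bound: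
  fixes m h :: real
  assumes E_sub: "E \<subseteq> {..<n} \<times> {..<n}" and irrefl: "\<forall>i. (i, i) \<notin> E"
    and "finite F" and "card F \<le> f"
    and j: "j \<in> {..<n} - F"
    and lower: "\<forall>u\<in>{..<n} - F. m \<le> pl E F f adv L t u a b"
    and "0 \<le> h"
    and gain: "m + h \<le> pl E F f adv L t j a b \<or>
       (2 * f < card (in_nbrs E j) \<and>
        f + 1 \<le> card {u \<in> {..<n} - F. (u, j) \<in> E \<and> m + h \<le> pl E F f adv L t u a b})"
  shows "m + h / real n + L (Suc t) j a b \<le> pl E F f adv L (Suc t) j a b"
proof -
  define I where "I = in_nbrs E j"
  define ns where "ns = sorted_list_of_set I"
  define g where "g u = (if u \<in> F then adv (Suc t) u j a b else pl E F f adv L t u a b)" for u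
  define xs where "xs = map g ns"
  define own where "own = pl E F f adv L t j a b"
  have I_sub: "I \<subseteq> {..<n} - {j}"
    using E_sub irrefl unfolding I_def in_nbrs_def by auto
  then have "finite I"
    using finite_subset by blast
  then have set_ns: "set ns = I" and "distinct ns"
    unfolding ns_def by auto
  have count: "length (filter P xs) = card ({u. P (g u)} \<inter> I)" for P
    unfolding xs_def using \<open>distinct ns\<close> set_ns by (simp add: filter_map comp_def distinct_length_filter)
  have length_xs: "length xs = card I"
    using count[of "\<lambda>_. True"] by simp
  have "card I \<le> card ({..<n} - {j})"
    using I_sub by (intro card_mono) auto
  then have length_kept: "length (trim f xs) + 1 \<le> n"
    using j by (simp add: length_trim length_xs, arith)
  have step: "pl E F f adv L (Suc t) j a b
      = (sum_list (trim f xs) + own) / (real (length (trim f xs)) + 1) + L (Suc t) j a b"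
    unfolding xs_def ns_def g_def own_def I_def by (simp add: Let_def)
  have below_faulty: "{u. g u < m} \<inter> I \<subseteq> F"
  proof
    fix u assume "u \<in> {u. g u < m} \<inter> I"
    then show "u \<in> F"
      using lower I_sub unfolding g_def by (cases "u \<in> F") force+
  qed
  have "length (filter (\<lambda>x. x < m) xs) \<le> f"
    unfolding count using card_mono[OF \<open>finite F\<close> below_faulty] \<open>card F \<le> f\<close> by simp
  then have kept_ge: "\<forall>x\<in>set (trim f xs). m \<le> x"
    using trim_ge_if_few_less by blast
  have own_ge: "m \<le> own"
    using lower j unfolding own_def by auto
  have "real (length (trim f xs)) * m + h \<le> sum_list (trim f xs) + own - m"
  proof (cases "m + h \<le> own")
    case True
    then show ?thesis
      using length_mult_le_sum_list[OF kept_ge] by simp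
  next
    case False
    then have deg: "2 * f < length xs"
      and many: "f + 1 \<le> card {u \<in> {..<n} - F. (u, j) \<in> E \<and> m + h \<le> pl E F f adv L t u a b}"
      using gain unfolding own_def I_def length_xs by auto
    have "card {u \<in> {..<n} - F. (u, j) \<in> E \<and> m + h \<le> pl E F f adv L t u a b}
        \<le> card ({u. m + h \<le> g u} \<inter> I)"
      using \<open>finite I\<close> by (intro card_mono) (auto simp: g_def I_def in_nbrs_def)
    then have "f + 1 \<le> length (filter (\<lambda>x. m + h \<le> x) xs)"
      using many count by simp
    then obtain y where "y \<in> set (trim f xs)" "m + h \<le> y"
      using ex_trim_ge_if_many_ge deg by blast
    then show ?thesis
      using length_mult_add_le_sum_list[OF kept_ge] own_ge by fastforce
  qed
  then have "m + h / real n \<le> (sum_list (trim f xs) + own) / (real (length (trim f xs)) + 1)"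
    using le_average_if_gain \<open>0 \<le> h\<close> length_kept by blast
  then show ?thesis
    using step by simp
qed

text \<open>Exchanging the two hypotheses negates every quantity in the update, and trimming
  commutes with negation.\<close>
lemma pl_swap:
  "pl E F f adv L t i a b =
   - pl E F f (\<lambda>t j i a b. - adv t j i b a) (\<lambda>t j a b. - L t j b a) t i b a"
proof (induction t arbitrary: i)
  case (Suc t)
  define xs where "xs = map (\<lambda>j. if j \<in> F then adv (Suc t) j i a b else pl E F f adv L t j a b)
      (sorted_list_of_set (in_nbrs E i))"
  have negated: "map (\<lambda>j. if j \<in> F then - adv (Suc t) j i a b
        else pl E F f (\<lambda>t j i a b. - adv t j i b a) (\<lambda>t j a b. - L t j b a) t j b a)
      (sorted_list_of_set (in_nbrs E i)) = map uminus xs"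
    unfolding xs_def using Suc by (simp add: fun_eq_iff)
  show ?case
    unfolding pl.simps Let_def negated sum_list_trim_uminus length_trim length_map Suc[of i]
    unfolding xs_def by (simp add: field_simps)
qed simp

section \<open>Reduced graphs\<close>

definition r_reachable :: "(nat \<times> nat) set \<Rightarrow> nat set \<Rightarrow> nat \<Rightarrow> nat set \<Rightarrow> bool" where
  "r_reachable E N r S \<longleftrightarrow> (\<exists>j\<in>S. r \<le> card {u \<in> N - S. (u, j) \<in> E})"

lemma ex_source_component_in_closed:
  assumes "finite N" and "S \<subseteq> N" and "S \<noteq> {}"
    and closed: "\<forall>u v. (u, v) \<in> EH \<and> v \<in> S \<longrightarrow> u \<in> S"
  shows "\<exists>C\<subseteq>S. source_component N EH C"
proof -
  define anc where "anc v = {u. (u, v) \<in> EH\<^sup>*}" for v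
  have anc_sub: "anc v \<subseteq> S" if "v \<in> S" for v
  proof
    fix u assume "u \<in> anc v"
    then have "(u, v) \<in> EH\<^sup>*"
      unfolding anc_def by simp
    then show "u \<in> S"
      using that
    proof (induction rule: converse_rtrancl_induct)
      case (step y z)
      then show ?case
        using closed by blast
    qed
  qed
  have finite_anc: "finite (anc v)" if "v \<in> S" for v
    using anc_sub[OF that] \<open>S \<subseteq> N\<close> \<open>finite N\<close> by (meson finite_subset)
  \<comment> \<open>a member of S with the fewest ancestors is reachable from all of them\<close>
  obtain j0 where "j0 \<in> S"
    using \<open>S \<noteq> {}\<close> by blast
  then obtain j where j: "j \<in> S" and j_min: "\<forall>v. v \<in> S \<longrightarrow> card (anc j) \<le> card (anc v)"
    using ex_has_least_nat[of "\<lambda>v. v \<in> S" j0 "\<lambda>v. card (anc v)"] by blast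
  define C where "C = {u. (u, j) \<in> EH\<^sup>* \<and> (j, u) \<in> EH\<^sup>*}"
  have path_back: "(j, u) \<in> EH\<^sup>*" if "(u, j) \<in> EH\<^sup>*" for u
  proof -
    have "u \<in> S"
      using anc_sub[OF j] that unfolding anc_def by auto
    then have "card (anc j) \<le> card (anc u)"
      using j_min by blast
    moreover have "anc u \<subseteq> anc j"
      using that unfolding anc_def by (auto intro: rtrancl_trans)
    ultimately have "anc u = anc j"
      using finite_anc[OF j] by (metis card_seteq)
    moreover have "j \<in> anc j"
      unfolding anc_def by simp
    ultimately have "j \<in> anc u"
      by simp
    then show ?thesis
      unfolding anc_def by simp
  qed
  have "C \<subseteq> S"
    using anc_sub[OF j] unfolding C_def anc_def by auto
  moreover have "source_component N EH C"
    unfolding source_component_def strongly_connected_component_def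
  proof (intro conjI allI impI ballI)
    show "C \<noteq> {}" "C \<subseteq> N"
      using \<open>C \<subseteq> S\<close> \<open>S \<subseteq> N\<close> unfolding C_def by auto
    show "(u, v) \<in> EH\<^sup>*" if "u \<in> C" "v \<in> C" for u v
      using that unfolding C_def by (blast intro: rtrancl_trans)
    show "w \<in> C" if "u \<in> C" "(u, w) \<in> EH\<^sup>* \<and> (w, u) \<in> EH\<^sup>*" for w u
      using that unfolding C_def by (blast intro: rtrancl_trans)
    show "u \<in> C" if "(u, v) \<in> EH \<and> v \<in> C" for u v
      using that path_back unfolding C_def by (blast intro: converse_rtrancl_into_rtrancl)
  qed
  ultimately show ?thesis
    by blast
qed

text \<open>If no member of S had f + 1 in-neighbours outside S, cutting all links into S would give
  a reduced graph in which S is closed under incoming links; a source component inside S would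
  then have zero divergence sum.\<close>
lemma r_reachable_if_identifiable:
  fixes K :: "nat \<Rightarrow> real"
  assumes "finite V" and "F \<subseteq> V" and "card F \<le> f"
    and ident: "\<forall>N EH C. reduced_graph1 V E f N EH \<and> source_component N EH C \<longrightarrow> (\<Sum>j\<in>C. K j) \<noteq> 0"
    and S: "S \<subseteq> V - F" "S \<noteq> {}" and K_zero: "\<forall>j\<in>S. K j = 0"
  shows "r_reachable E (V - F) (f + 1) S"
proof (rule ccontr)
  assume "\<not> r_reachable E (V - F) (f + 1) S"
  then have few: "\<forall>j\<in>S. card {u \<in> V - F - S. (u, j) \<in> E} \<le> f"
    unfolding r_reachable_def by auto
  define EH where "EH = {(u, v) \<in> E. u \<in> V - F \<and> v \<in> V - F \<and> \<not> (u \<notin> S \<and> v \<in> S)}"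
  have "reduced_graph1 V E f (V - F) EH"
    unfolding reduced_graph1_def
  proof (intro exI[of _ F] conjI ballI)
    show "card {j \<in> V - F. (j, i) \<in> E \<and> (j, i) \<notin> EH} \<le> f" if "i \<in> V - F" for i
    proof (cases "i \<in> S")
      case True
      have "{j \<in> V - F. (j, i) \<in> E \<and> (j, i) \<notin> EH} = {u \<in> V - F - S. (u, i) \<in> E}"
        using that True unfolding EH_def by auto
      then show ?thesis
        using few True by simp
    next
      case False
      then have no_cut: "{j \<in> V - F. (j, i) \<in> E \<and> (j, i) \<notin> EH} = {}"
        using that unfolding EH_def by auto
      show ?thesis
        unfolding no_cut by simp
    qed
  qed (use assms EH_def in auto)
  moreover have "\<forall>u v. (u, v) \<in> EH \<and> v \<in> S \<longrightarrow> u \<in> S"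
    unfolding EH_def by blast
  then obtain C where C: "C \<subseteq> S" "source_component (V - F) EH C"
    using ex_source_component_in_closed[of "V - F" S EH] S \<open>finite V\<close> by blast
  ultimately have "(\<Sum>j\<in>C. K j) \<noteq> 0"
    using ident by blast
  moreover have "(\<Sum>j\<in>C. K j) = 0"
    using K_zero C(1) by (intro sum.neutral) blast
  ultimately show False
    by contradiction
qed

text \<open>Removing f in-neighbours of j and cutting its remaining (at most f) incoming links
  isolates j as a source component of a reduced graph.\<close>
lemma nonzero_if_low_indegree:
  fixes K :: "nat \<Rightarrow> real"
  assumes E_sub: "E \<subseteq> V \<times> V" and irrefl: "\<forall>i. (i, i) \<notin> E" and "finite V"
    and ident: "\<forall>N EH C. reduced_graph1 V E f N EH \<and> source_component N EH C \<longrightarrow> (\<Sum>j\<in>C. K j) \<noteq> 0"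
    and j: "j \<in> V" and low: "card (in_nbrs E j) \<le> 2 * f"
  shows "K j \<noteq> 0"
proof -
  define I where "I = in_nbrs E j"
  have "I \<subseteq> V" "j \<notin> I"
    using E_sub irrefl unfolding I_def in_nbrs_def by auto
  then have "finite I"
    using \<open>finite V\<close> finite_subset by blast
  obtain F' where F': "F' \<subseteq> I" "card F' = min f (card I)"
    using obtain_subset_with_card_n[of "min f (card I)" I] by auto
  define EH where "EH = {(u, v) \<in> E. u \<in> V - F' \<and> v \<in> V - F' \<and> v \<noteq> j}"
  have reduced: "reduced_graph1 V E f (V - F') EH"
    unfolding reduced_graph1_def
  proof (intro exI[of _ F'] conjI ballI)
    show "card {u \<in> V - F'. (u, i) \<in> E \<and> (u, i) \<notin> EH} \<le> f" if "i \<in> V - F'" for i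
    proof (cases "i = j")
      case True
      then have cut: "{u \<in> V - F'. (u, i) \<in> E \<and> (u, i) \<notin> EH} = I - F'"
        using \<open>I \<subseteq> V\<close> that unfolding EH_def I_def in_nbrs_def by auto
      have "card (I - F') = card I - card F'"
        using F' \<open>finite I\<close> by (simp add: card_Diff_subset finite_subset)
      then show ?thesis
        unfolding cut using F' low unfolding I_def by linarith
    next
      case False
      then have no_cut: "{u \<in> V - F'. (u, i) \<in> E \<and> (u, i) \<notin> EH} = {}"
        using that unfolding EH_def by auto
      show ?thesis
        unfolding no_cut by simp
    qed
  qed (use F' \<open>I \<subseteq> V\<close> EH_def in auto)
  moreover have "{j} \<subseteq> V - F'"
    using j \<open>j \<notin> I\<close> F'(1) by blast
  moreover have "\<forall>u v. (u, v) \<in> EH \<and> v \<in> {j} \<longrightarrow> u \<in> {j}"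
    unfolding EH_def by blast
  ultimately obtain C where "C \<subseteq> {j}" "source_component (V - F') EH C"
    using ex_source_component_in_closed[of "V - F'" "{j}" EH] \<open>finite V\<close> by blast
  moreover from this have "C = {j}"
    unfolding source_component_def strongly_connected_component_def by blast
  ultimately show ?thesis
    using ident reduced by force
qed

section \<open>Divergence along a sample path\<close>

lemma filterlim_at_top_if_periodic_gain:
  fixes r :: "nat \<Rightarrow> 'a \<Rightarrow> real"
  assumes "finite N" and "i \<in> N" and "0 < p" and "0 < \<gamma>"
    and gain: "\<And>s m. T \<le> s \<Longrightarrow> \<forall>u\<in>N. m \<le> r s u \<Longrightarrow> \<forall>u\<in>N. m + \<gamma> \<le> r (s + p) u"
  shows "filterlim (\<lambda>t. r t i) at_top sequentially"
proof -
  define m0 where "m0 = Min ((\<lambda>(s, u). r s u) ` ({T..<T + p} \<times> N))"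
  have m0_le: "m0 \<le> r s u" if "s \<in> {T..<T + p}" "u \<in> N" for s u
    unfolding m0_def using \<open>finite N\<close> that by (intro Min_le) auto
  have periods: "\<forall>s\<in>{T..<T + p}. \<forall>u\<in>N. m0 + real q * \<gamma> \<le> r (s + q * p) u" for q
  proof (induction q)
    case (Suc q)
    show ?case
    proof (intro ballI)
      fix s u assume "s \<in> {T..<T + p}" "u \<in> N"
      then have "m0 + real q * \<gamma> + \<gamma> \<le> r (s + q * p + p) u"
        using gain[of "s + q * p" "m0 + real q * \<gamma>"] Suc by auto
      then show "m0 + real (Suc q) * \<gamma> \<le> r (s + Suc q * p) u"
        by (simp add: algebra_simps)
    qed
  qed (use m0_le in simp)
  have bound: "m0 + real ((t - T) div p) * \<gamma> \<le> r t i" if "T \<le> t" for t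
  proof -
    have "T + (t - T) mod p \<in> {T..<T + p}"
      using \<open>0 < p\<close> by simp
    moreover have "t = T + (t - T) mod p + (t - T) div p * p"
      using that by simp
    ultimately show ?thesis
      using periods \<open>i \<in> N\<close> by metis
  qed
  show ?thesis
  proof (subst filterlim_at_top, intro allI)
    fix z :: real
    obtain q :: nat where "(z - m0) / \<gamma> \<le> real q"
      using real_arch_simple by blast
    then have z_le: "z \<le> m0 + real q * \<gamma>"
      using \<open>0 < \<gamma>\<close> by (simp add: divide_le_eq algebra_simps)
    show "eventually (\<lambda>t. z \<le> r t i) sequentially"
      unfolding eventually_sequentially
    proof (intro exI allI impI)
      fix t assume t: "T + q * p \<le> t"
      then have "q \<le> (t - T) div p"
        using \<open>0 < p\<close> by (simp add: less_eq_div_iff_mult_less_eq)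
      then have "real q * \<gamma> \<le> real ((t - T) div p) * \<gamma>"
        using \<open>0 < \<gamma>\<close> by (intro mult_right_mono) auto
      then show "z \<le> r t i"
        using bound[of t] t z_le by linarith
    qed
  qed
qed

text \<open>Along a fixed sample path: the signal terms of the agents in P eventually grow at least
  like c t, those of the other non-faulty agents drop at most like \<epsilon> t. Then within any n
  iterations the gain spreads from P to every non-faulty agent, and the minimum of the
  non-faulty values rises by c / (2 n^n).\<close>
context
  fixes E :: "(nat \<times> nat) set" and F :: "nat set" and f :: nat
    and adv :: "nat \<Rightarrow> nat \<Rightarrow> nat \<Rightarrow> 'h \<Rightarrow> 'h \<Rightarrow> real"
    and L :: "nat \<Rightarrow> nat \<Rightarrow> 'h \<Rightarrow> 'h \<Rightarrow> real"
    and a b :: 'h and n :: nat and P :: "nat set" and c \<epsilon> :: real and T :: nat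
  assumes E_sub: "E \<subseteq> {..<n} \<times> {..<n}" and irrefl: "\<forall>i. (i, i) \<notin> E"
    and finite_F: "finite F" and card_F: "card F \<le> f"
    and n_pos: "0 < n"
    and reachable: "\<forall>S \<subseteq> {..<n} - F. S \<noteq> {} \<longrightarrow> S \<inter> P = {} \<longrightarrow>
                      r_reachable E ({..<n} - F) (f + 1) S"
    and low_indegree: "\<forall>j\<in>{..<n} - F. card (in_nbrs E j) \<le> 2 * f \<longrightarrow> j \<in> P"
    and c_pos: "0 < c" and \<epsilon>_nonneg: "0 \<le> \<epsilon>" and \<epsilon>_small: "4 * real n ^ (n + 1) * \<epsilon> \<le> c"
    and growth: "\<forall>t\<ge>T. \<forall>j\<in>{..<n} - F. - \<epsilon> * real t \<le> L t j a b \<and> (j \<in> P \<longrightarrow> c * real t \<le> L t j a b)"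
begin

lemma pl_Suc_lower_bound_drift:
  assumes "T \<le> t" and lower: "\<forall>u\<in>{..<n} - F. m \<le> pl E F f adv L t u a b"
    and u: "u \<in> {..<n} - F" and "0 \<le> h"
    and gain: "m + h \<le> pl E F f adv L t u a b \<or>
       (2 * f < card (in_nbrs E u) \<and>
        f + 1 \<le> card {v \<in> {..<n} - F. (v, u) \<in> E \<and> m + h \<le> pl E F f adv L t v a b})"
  shows "m + h / real n - \<epsilon> * real (Suc t) \<le> pl E F f adv L (Suc t) u a b"
proof -
  have "- \<epsilon> * real (Suc t) \<le> L (Suc t) u a b"
    using growth[rule_format, of "Suc t" u] \<open>T \<le> t\<close> u by simp
  then show ?thesis
    using pl_Suc_lower_bound[OF E_sub irrefl finite_F card_F u lower \<open>0 \<le> h\<close> gain] by linarith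
qed

lemma pl_Suc_lower_bound_informative:
  assumes "T \<le> t" and lower: "\<forall>u\<in>{..<n} - F. m \<le> pl E F f adv L t u a b"
    and u: "u \<in> {..<n} - F" "u \<in> P"
  shows "m + c * real (Suc t) \<le> pl E F f adv L (Suc t) u a b"
proof -
  have "m + 0 \<le> pl E F f adv L t u a b"
    using lower u by simp
  then have "m + L (Suc t) u a b \<le> pl E F f adv L (Suc t) u a b"
    using pl_Suc_lower_bound[OF E_sub irrefl finite_F card_F u(1) lower, of 0] by simp
  moreover have "c * real (Suc t) \<le> L (Suc t) u a b"
    using growth[rule_format, of "Suc t" u] \<open>T \<le> t\<close> u by simp
  ultimately show ?thesis
    by linarith
qed

text \<open>The agents above level m + h stay above m + h/n (up to the drift) in the next iteration,
  and while they are not all non-faulty agents a new one joins: an agent of P by its own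
  signal, otherwise, by reachability, an agent with f + 1 in-neighbours among them.\<close>
lemma card_exceeding_Suc:
  assumes "T \<le> t" and lower: "\<forall>u\<in>{..<n} - F. m \<le> pl E F f adv L t u a b"
    and "0 \<le> h" and h_small: "h / real n \<le> c * real (Suc t)"
  defines "B \<equiv> {u \<in> {..<n} - F. m + h \<le> pl E F f adv L t u a b}"
    and "B' \<equiv> {u \<in> {..<n} - F. m + h / real n - \<epsilon> * real (Suc t) \<le> pl E F f adv L (Suc t) u a b}"
  assumes card_B: "B = {..<n} - F \<or> k \<le> card B"
  shows "B' = {..<n} - F \<or> Suc k \<le> card B'"
proof -
  have B'_sub: "B' \<subseteq> {..<n} - F" and B_sub: "B \<subseteq> {..<n} - F"
    unfolding B_def B'_def by auto
  have stay: "B \<subseteq> B'"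
    unfolding B_def B'_def using pl_Suc_lower_bound_drift[OF \<open>T \<le> t\<close> lower _ \<open>0 \<le> h\<close>] by blast
  have join: "\<exists>j\<in>B'. j \<notin> B" if "B \<noteq> {..<n} - F"
  proof (cases "({..<n} - F - B) \<inter> P = {}")
    case False
    then obtain j where j: "j \<in> {..<n} - F - B" "j \<in> P"
      by blast
    moreover have "0 \<le> \<epsilon> * real (Suc t)"
      using \<epsilon>_nonneg by simp
    ultimately have "m + h / real n - \<epsilon> * real (Suc t) \<le> pl E F f adv L (Suc t) j a b"
      using pl_Suc_lower_bound_informative[OF \<open>T \<le> t\<close> lower, of j] h_small by force
    then show ?thesis
      using j unfolding B'_def by blast
  next
    case True
    moreover have "{..<n} - F - B \<noteq> {}"
      using that B_sub by blast
    ultimately have "r_reachable E ({..<n} - F) (f + 1) ({..<n} - F - B)"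
      using reachable[rule_format, of "{..<n} - F - B"] by blast
    then obtain j where j: "j \<in> {..<n} - F - B"
      and many: "f + 1 \<le> card {u \<in> {..<n} - F - ({..<n} - F - B). (u, j) \<in> E}"
      unfolding r_reachable_def by blast
    have "2 * f < card (in_nbrs E j)"
      using low_indegree j True by force
    moreover have "{u \<in> {..<n} - F - ({..<n} - F - B). (u, j) \<in> E}
        = {v \<in> {..<n} - F. (v, j) \<in> E \<and> m + h \<le> pl E F f adv L t v a b}"
      using B_sub unfolding B_def by auto
    ultimately have "m + h / real n - \<epsilon> * real (Suc t) \<le> pl E F f adv L (Suc t) j a b"
      using pl_Suc_lower_bound_drift[OF \<open>T \<le> t\<close> lower _ \<open>0 \<le> h\<close>] j many by auto
    then show ?thesis
      using j unfolding B'_def by blast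
  qed
  show ?thesis
  proof (cases "B = {..<n} - F")
    case False
    then have "B \<subset> B'"
      using stay join by blast
    then have "card B < card B'"
      using B'_sub by (meson finite_Diff finite_lessThan finite_subset psubset_card_mono)
    then show ?thesis
      using False card_B by simp
  qed (use stay B'_sub in auto)
qed

lemma pl_window_lower_bounds:
  assumes "T \<le> s" and lower: "\<forall>u\<in>{..<n} - F. m \<le> pl E F f adv L s u a b"
  defines "B k \<equiv> {u \<in> {..<n} - F.
             m - \<epsilon> * real k * real (s + n) + c * real s / real n ^ k \<le> pl E F f adv L (s + k) u a b}"
  shows "k \<le> n \<Longrightarrow> (\<forall>u\<in>{..<n} - F. m - \<epsilon> * real k * real (s + n) \<le> pl E F f adv L (s + k) u a b)
           \<and> (B k = {..<n} - F \<or> k \<le> card (B k))"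
proof (induction k)
  case 0
  then show ?case
    using lower by (simp add: B_def)
next
  case (Suc k)
  define m' where "m' = m - \<epsilon> * real k * real (s + n)"
  define h where "h = c * real s / real n ^ k"
  have lower': "\<forall>u\<in>{..<n} - F. m' \<le> pl E F f adv L (s + k) u a b"
    and card_B: "B k = {..<n} - F \<or> k \<le> card (B k)"
    using Suc by (auto simp: m'_def)
  have "T \<le> s + k"
    using \<open>T \<le> s\<close> by simp
  have "\<epsilon> * real (Suc (s + k)) \<le> \<epsilon> * real (s + n)"
    using Suc.prems \<epsilon>_nonneg by (intro mult_left_mono) auto
  then have drift: "m - \<epsilon> * real (Suc k) * real (s + n) \<le> m' - \<epsilon> * real (Suc (s + k))"
    unfolding m'_def by (simp add: algebra_simps)
  have "0 \<le> h"
    unfolding h_def using c_pos by simp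
  have h_div: "h / real n = c * real s / real n ^ Suc k"
    unfolding h_def by simp
  also have "\<dots> \<le> c * real s / 1"
    using c_pos n_pos one_le_power[of "real n" "Suc k"] by (intro divide_left_mono) simp_all
  also have "\<dots> \<le> c * real (Suc (s + k))"
    using c_pos by simp
  finally have h_small: "h / real n \<le> c * real (Suc (s + k))" .
  define B' where "B' = {u \<in> {..<n} - F.
      m' + h / real n - \<epsilon> * real (Suc (s + k)) \<le> pl E F f adv L (Suc (s + k)) u a b}"
  have "B k = {u \<in> {..<n} - F. m' + h \<le> pl E F f adv L (s + k) u a b}"
    unfolding B_def m'_def h_def ..
  then have card_B': "B' = {..<n} - F \<or> Suc k \<le> card B'"
    unfolding B'_def using card_exceeding_Suc[OF \<open>T \<le> s + k\<close> lower' \<open>0 \<le> h\<close> h_small] card_B by simp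
  have "m - \<epsilon> * real (Suc k) * real (s + n) + c * real s / real n ^ Suc k
      \<le> m' + h / real n - \<epsilon> * real (Suc (s + k))"
    using drift h_div by linarith
  then have "B' \<subseteq> B (Suc k)"
    unfolding B_def B'_def by (auto simp del: pl.simps)
  moreover have "B (Suc k) \<subseteq> {..<n} - F"
    unfolding B_def by blast
  ultimately have "B (Suc k) = {..<n} - F \<or> Suc k \<le> card (B (Suc k))"
    using card_B' card_mono[of "B (Suc k)" B'] finite_subset[of "B (Suc k)" "{..<n} - F"] by auto
  moreover have "\<forall>u\<in>{..<n} - F. m - \<epsilon> * real (Suc k) * real (s + n) \<le> pl E F f adv L (s + Suc k) u a b"
  proof
    fix u assume u: "u \<in> {..<n} - F"
    then have "m' + 0 \<le> pl E F f adv L (s + k) u a b"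
      using lower' by simp
    then have "m' + 0 / real n - \<epsilon> * real (Suc (s + k)) \<le> pl E F f adv L (Suc (s + k)) u a b"
      using pl_Suc_lower_bound_drift[OF \<open>T \<le> s + k\<close> lower' u order_refl] by blast
    then show "m - \<epsilon> * real (Suc k) * real (s + n) \<le> pl E F f adv L (s + Suc k) u a b"
      unfolding add_Suc_right using drift by linarith
  qed
  ultimately show ?case
    by simp
qed

lemma pl_window_gain:
  assumes "T \<le> s" and "n \<le> s" and lower: "\<forall>u\<in>{..<n} - F. m \<le> pl E F f adv L s u a b"
  shows "\<forall>u\<in>{..<n} - F. m + c / (2 * real n ^ n) \<le> pl E F f adv L (s + n) u a b"
proof
  fix u assume u: "u \<in> {..<n} - F"
  define B where "B = {u \<in> {..<n} - F.
      m - \<epsilon> * real n * real (s + n) + c * real s / real n ^ n \<le> pl E F f adv L (s + n) u a b}"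
  have "B \<subseteq> {..<n} - F" and "card ({..<n} - F) \<le> n"
    unfolding B_def by (auto intro: card_mono[of "{..<n}", simplified])
  moreover have "B = {..<n} - F \<or> n \<le> card B"
    using pl_window_lower_bounds[OF \<open>T \<le> s\<close> lower, of n] unfolding B_def by simp
  ultimately have "B = {..<n} - F"
    using card_mono[of "{..<n} - F" B] card_subset_eq[of "{..<n} - F" B] by force
  then have reached: "m - \<epsilon> * real n * real (s + n) + c * real s / real n ^ n \<le> pl E F f adv L (s + n) u a b"
    using u unfolding B_def by blast
  have n_pow: "0 < real n ^ n"
    using n_pos by simp
  have "\<epsilon> * real n * real (s + n) * (2 * real n ^ n) = (4 * real n ^ (n + 1) * \<epsilon>) * (real (s + n) / 2)"
    by (simp add: algebra_simps)
  also have "\<dots> \<le> c * (real (s + n) / 2)"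
    using \<epsilon>_small by (intro mult_right_mono) auto
  also have "\<dots> \<le> c * real s"
    using c_pos \<open>n \<le> s\<close> by (intro mult_left_mono) auto
  finally have "\<epsilon> * real n * real (s + n) \<le> c * real s / (2 * real n ^ n)"
    using n_pow by (simp add: pos_le_divide_eq)
  moreover have "c / (2 * real n ^ n) \<le> c * real s / (2 * real n ^ n)"
    using c_pos n_pow n_pos \<open>n \<le> s\<close> by (intro divide_right_mono) auto
  ultimately show "m + c / (2 * real n ^ n) \<le> pl E F f adv L (s + n) u a b"
    using reached by (simp add: field_simps)
qed

lemma pl_tendsto_at_top:
  assumes "i \<in> {..<n} - F"
  shows "filterlim (\<lambda>t. pl E F f adv L t i a b) at_top sequentially"
proof (rule filterlim_at_top_if_periodic_gain[where r = "\<lambda>t u. pl E F f adv L t u a b"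
      and N = "{..<n} - F" and T = "max T n" and p = n and \<gamma> = "c / (2 * real n ^ n)"])
  show "\<forall>u\<in>{..<n} - F. m + c / (2 * real n ^ n) \<le> pl E F f adv L (s + n) u a b"
    if "max T n \<le> s" "\<forall>u\<in>{..<n} - F. m \<le> pl E F f adv L s u a b" for s m
    using pl_window_gain that by simp
qed (use assms n_pos c_pos in auto)

end

lemma eventually_linear_bounds_if_rates:
  fixes L :: "nat \<Rightarrow> 'j \<Rightarrow> real"
  assumes "finite N" and rates: "\<forall>j\<in>N. ((\<lambda>t. L t j / real t) \<longlongrightarrow> K j) sequentially"
    and K_nonneg: "\<forall>j\<in>N. 0 \<le> K j" and "0 < \<epsilon>" and "\<epsilon> \<le> c"
  shows "\<exists>T. \<forall>t\<ge>T. \<forall>j\<in>N. - \<epsilon> * real t \<le> L t j \<and> (2 * c \<le> K j \<longrightarrow> c * real t \<le> L t j)"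
proof -
  have "\<forall>j\<in>N. eventually (\<lambda>t. \<bar>L t j / real t - K j\<bar> < \<epsilon>) sequentially"
  proof
    fix j assume "j \<in> N"
    show "eventually (\<lambda>t. \<bar>L t j / real t - K j\<bar> < \<epsilon>) sequentially"
      using tendstoD[OF rates[rule_format, OF \<open>j \<in> N\<close>] \<open>0 < \<epsilon>\<close>] by (simp add: dist_real_def)
  qed
  then have "eventually (\<lambda>t. \<forall>j\<in>N. \<bar>L t j / real t - K j\<bar> < \<epsilon>) sequentially"
    unfolding eventually_ball_finite_distrib[OF \<open>finite N\<close>] .
  then obtain T where T: "\<And>t j. T \<le> t \<Longrightarrow> j \<in> N \<Longrightarrow> \<bar>L t j / real t - K j\<bar> < \<epsilon>"
    unfolding eventually_sequentially by blast
  have "- \<epsilon> * real t \<le> L t j \<and> (2 * c \<le> K j \<longrightarrow> c * real t \<le> L t j)"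
    if "max T 1 \<le> t" "j \<in> N" for t j
  proof -
    have "0 < real t"
      using that by simp
    moreover have "K j - \<epsilon> < L t j / real t"
      using T[of t j] that by (simp add: abs_less_iff)
    ultimately have "real t * (K j - \<epsilon>) \<le> L t j"
      by (simp add: field_simps)
    moreover have "real t * (- \<epsilon>) \<le> real t * (K j - \<epsilon>)"
      using K_nonneg that by (intro mult_left_mono) auto
    moreover have "real t * c \<le> real t * (K j - \<epsilon>)" if "2 * c \<le> K j"
      using that \<open>\<epsilon> \<le> c\<close> by (intro mult_left_mono) auto
    ultimately show ?thesis
      by (auto simp: algebra_simps)
  qed
  then show ?thesis
    by blast
qed

lemma pl_tendsto_if_log_ratio_rates:
  fixes K :: "nat \<Rightarrow> real"
  assumes E_sub: "E \<subseteq> {..<n} \<times> {..<n}" and irrefl: "\<forall>i. (i, i) \<notin> E"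
    and F_sub: "F \<subseteq> {..<n}" and card_F: "card F \<le> f"
    and ident: "\<forall>N EH C. reduced_graph1 {..<n} E f N EH \<and> source_component N EH C \<longrightarrow> (\<Sum>j\<in>C. K j) \<noteq> 0"
    and K_nonneg: "\<forall>j\<in>{..<n}. 0 \<le> K j"
    and rates: "\<forall>j\<in>{..<n} - F. ((\<lambda>t. L t j a b / real t) \<longlongrightarrow> K j) sequentially"
    and antisym: "\<And>t j. L t j b a = - L t j a b"
    and i: "i \<in> {..<n} - F"
  shows "filterlim (\<lambda>t. pl E F f adv L t i a b) at_top sequentially"
    and "filterlim (\<lambda>t. pl E F f adv L t i b a) at_bot sequentially"
proof -
  define P where "P = {j \<in> {..<n} - F. 0 < K j}"
  have "finite F"
    using F_sub finite_subset by blast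
  have "0 < n"
    using i by auto
  have reachable: "\<forall>S \<subseteq> {..<n} - F. S \<noteq> {} \<longrightarrow> S \<inter> P = {} \<longrightarrow> r_reachable E ({..<n} - F) (f + 1) S"
  proof (intro allI impI)
    fix S assume S: "S \<subseteq> {..<n} - F" "S \<noteq> {}" "S \<inter> P = {}"
    then have "\<forall>j\<in>S. K j = 0"
      using K_nonneg unfolding P_def by force
    then show "r_reachable E ({..<n} - F) (f + 1) S"
      using r_reachable_if_identifiable[OF finite_lessThan F_sub card_F ident] S by blast
  qed
  have low_indegree: "\<forall>j\<in>{..<n} - F. card (in_nbrs E j) \<le> 2 * f \<longrightarrow> j \<in> P"
    using nonzero_if_low_indegree[OF E_sub irrefl finite_lessThan ident] K_nonneg
    unfolding P_def by force
  define c where "c = Min (insert 1 (K ` P)) / 2"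
  have "finite P"
    unfolding P_def by simp
  then have "0 < c" and c_le: "\<forall>j\<in>P. 2 * c \<le> K j"
    unfolding c_def P_def by auto
  define \<epsilon> where "\<epsilon> = c / (4 * real n ^ (n + 1))"
  have "1 \<le> 4 * real n ^ (n + 1)"
    using \<open>0 < n\<close> one_le_power[of "real n" "n + 1"] by simp
  then have "0 < \<epsilon>" "\<epsilon> \<le> c" "4 * real n ^ (n + 1) * \<epsilon> \<le> c"
    unfolding \<epsilon>_def using \<open>0 < c\<close> by (auto simp: divide_le_eq_1 divide_le_eq)
  moreover have "\<forall>j\<in>{..<n} - F. 0 \<le> K j"
    using K_nonneg by blast
  ultimately obtain T where T: "\<forall>t\<ge>T. \<forall>j\<in>{..<n} - F.
      - \<epsilon> * real t \<le> L t j a b \<and> (2 * c \<le> K j \<longrightarrow> c * real t \<le> L t j a b)"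
    using eventually_linear_bounds_if_rates[OF finite_Diff[OF finite_lessThan] rates] by blast
  then have growth: "\<forall>t\<ge>T. \<forall>j\<in>{..<n} - F. - \<epsilon> * real t \<le> L t j a b \<and> (j \<in> P \<longrightarrow> c * real t \<le> L t j a b)"
    using c_le by blast
  note tendsto = pl_tendsto_at_top[OF E_sub irrefl \<open>finite F\<close> card_F \<open>0 < n\<close> reachable low_indegree
      \<open>0 < c\<close> less_imp_le[OF \<open>0 < \<epsilon>\<close>] \<open>4 * real n ^ (n + 1) * \<epsilon> \<le> c\<close>]
  show "filterlim (\<lambda>t. pl E F f adv L t i a b) at_top sequentially"
    using tendsto[where L = L and a = a and b = b, OF growth i] .
  have "\<forall>t\<ge>T. \<forall>j\<in>{..<n} - F. - \<epsilon> * real t \<le> - L t j b a \<and> (j \<in> P \<longrightarrow> c * real t \<le> - L t j b a)"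
    using growth unfolding antisym minus_minus .
  then have "filterlim (\<lambda>t. pl E F f (\<lambda>t j i x y. - adv t j i y x) (\<lambda>t j x y. - L t j y x) t i a b)
      at_top sequentially"
    by (rule tendsto[where L = "\<lambda>t j x y. - L t j y x" and a = a and b = b, OF _ i])
  then have "filterlim (\<lambda>t. - pl E F f (\<lambda>t j i x y. - adv t j i y x) (\<lambda>t j x y. - L t j y x) t i a b)
      at_bot sequentially"
    by (rule filterlim_uminus_at_top[THEN iffD1])
  then show "filterlim (\<lambda>t. pl E F f adv L t i b a) at_bot sequentially"
    by (simp only: pl_swap[of E F f adv L _ i b a])
qed

section \<open>Growth of the log-likelihood ratios\<close>

lemma KL_nonneg:
  assumes "finite S" and pos: "\<forall>w\<in>S. 0 < p w \<and> 0 < q w"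
    and "(\<Sum>w\<in>S. p w) = 1" and "(\<Sum>w\<in>S. q w) = 1"
  shows "0 \<le> KL S p q"
proof -
  have "p w - q w \<le> p w * ln (p w / q w)" if "w \<in> S" for w
  proof -
    have "0 < p w" "0 < q w"
      using pos that by auto
    then have "1 - q w / p w \<le> ln (p w / q w)"
      using ln_le_minus_one[of "q w / p w"] by (simp add: ln_div)
    then have "p w * (1 - q w / p w) \<le> p w * ln (p w / q w)"
      using \<open>0 < p w\<close> by (intro mult_left_mono) auto
    then show ?thesis
      using \<open>0 < p w\<close> by (simp add: algebra_simps)
  qed
  then have "(\<Sum>w\<in>S. p w - q w) \<le> KL S p q"
    unfolding KL_def by (intro sum_mono)
  then show ?thesis
    using assms by (simp add: sum_subtractf)
qed

text \<open>A strong law of large numbers for bounded independent variables with a common mean: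
  Hoeffding's inequality makes the probabilities of the deviation events summable, and
  Borel-Cantelli turns that into an almost sure statement.\<close>
lemma (in prob_space) AE_eventually_sum_deviation_less:
  fixes X :: "'i \<Rightarrow> 'a \<Rightarrow> real" and J :: "nat \<Rightarrow> 'i set"
  assumes indep: "indep_vars (\<lambda>_. borel) X I"
    and J: "\<And>t. J t \<subseteq> I" "\<And>t. finite (J t)" "\<And>t. card (J t) = t"
    and bounded: "\<And>i. i \<in> I \<Longrightarrow> AE x in M. X i x \<in> {lo..hi}" and "lo < hi"
    and mean: "\<And>i. i \<in> I \<Longrightarrow> expectation (X i) = \<mu>"
    and "0 < \<delta>"
  shows "AE x in M. eventually (\<lambda>t. \<bar>(\<Sum>i\<in>J t. X i x) - real t * \<mu>\<bar> < \<delta> * real t) sequentially"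
proof -
  define A where "A t = {x \<in> space M. \<delta> * real t \<le> \<bar>(\<Sum>i\<in>J t. X i x) - real t * \<mu>\<bar>}" for t
  define c where "c = 2 * \<delta>\<^sup>2 / (hi - lo)\<^sup>2"
  have "0 < c"
    unfolding c_def using \<open>0 < \<delta>\<close> \<open>lo < hi\<close> by simp
  have prob_A: "prob (A t) \<le> 2 * exp (- c) ^ t" for t
  proof (cases "t = 0")
    case False
    interpret Hoeffding_ineq M "J t" X "\<lambda>_. lo" "\<lambda>_. hi" "real t * \<mu>"
    proof unfold_locales
      show "indep_vars (\<lambda>_. borel) X (J t)"
        using indep_vars_subset[OF indep J(1)] .
      have "(\<Sum>i\<in>J t. expectation (X i)) = (\<Sum>i\<in>J t. \<mu>)"
        using mean J(1) by (intro sum.cong) auto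
      then show "real t * \<mu> \<equiv> \<Sum>i\<in>J t. expectation (X i)"
        using J(3) by simp
      show "AE x in M. X i x \<in> {lo..hi}" if "i \<in> J t" for i
        using bounded J(1) that by blast
    qed (use J in simp)
    have sum_sq: "(\<Sum>i\<in>J t. (hi - lo)\<^sup>2) = real t * (hi - lo)\<^sup>2"
      using J by simp
    have "prob (A t) \<le> 2 * exp (- 2 * (\<delta> * real t)\<^sup>2 / (\<Sum>i\<in>J t. (hi - lo)\<^sup>2))"
      unfolding A_def using Hoeffding_ineq_abs_ge[of "\<delta> * real t"] \<open>0 < \<delta>\<close> \<open>lo < hi\<close> False sum_sq
      by simp
    also have "- 2 * (\<delta> * real t)\<^sup>2 / (\<Sum>i\<in>J t. (hi - lo)\<^sup>2) = real t * (- c)"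
    proof -
      define D where "D = (hi - lo)\<^sup>2"
      have "0 < D" "0 < real t"
        unfolding D_def using \<open>lo < hi\<close> False by auto
      then show ?thesis
        unfolding sum_sq c_def D_def[symmetric] by (simp add: J(3) power2_eq_square field_simps)
    qed
    also have "exp (real t * (- c)) = exp (- c) ^ t"
      by (rule exp_of_nat_mult)
    finally show ?thesis .
  next
    case True
    have "prob (A t) \<le> 1"
      by (rule prob_le_1)
    moreover have "2 * exp (- c) ^ t = 2"
      using True by simp
    ultimately show ?thesis
      by linarith
  qed
  have "(\<lambda>x. \<Sum>i\<in>J t. X i x) \<in> borel_measurable M" for t
    using indep J(1) unfolding indep_vars_def by (intro borel_measurable_sum) blast
  then have "A t \<in> events" for t
    unfolding A_def by measurable
  moreover have "summable (\<lambda>t. measure M (A t))"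
  proof (rule summable_comparison_test)
    show "\<exists>N. \<forall>t\<ge>N. norm (measure M (A t)) \<le> 2 * exp (- c) ^ t"
      using prob_A by auto
    show "summable (\<lambda>t. 2 * exp (- c) ^ t)"
      using \<open>0 < c\<close> by (intro summable_mult summable_geometric) auto
  qed
  ultimately have "AE x in M. eventually (\<lambda>t. x \<in> space M - A t) sequentially"
    by (intro borel_cantelli_AE1) (auto simp: emeasure_eq_measure)
  then show ?thesis
    by (rule AE_mp) (auto simp: A_def elim: eventually_mono intro!: AE_I2)
qed

lemma (in prob_space) AE_sum_div_tendsto_mean:
  fixes X :: "'i \<Rightarrow> 'a \<Rightarrow> real" and J :: "nat \<Rightarrow> 'i set"
  assumes indep: "indep_vars (\<lambda>_. borel) X I"
    and J: "\<And>t. J t \<subseteq> I" "\<And>t. finite (J t)" "\<And>t. card (J t) = t"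
    and bounded: "\<And>i. i \<in> I \<Longrightarrow> AE x in M. X i x \<in> {lo..hi}" and "lo < hi"
    and mean: "\<And>i. i \<in> I \<Longrightarrow> expectation (X i) = \<mu>"
  shows "AE x in M. ((\<lambda>t. (\<Sum>i\<in>J t. X i x) / real t) \<longlongrightarrow> \<mu>) sequentially"
proof -
  have "AE x in M. \<forall>m. eventually (\<lambda>t. \<bar>(\<Sum>i\<in>J t. X i x) - real t * \<mu>\<bar>
      < inverse (real (Suc m)) * real t) sequentially"
    unfolding AE_all_countable
    using AE_eventually_sum_deviation_less[OF indep J bounded \<open>lo < hi\<close> mean] by simp
  then show ?thesis
  proof (rule AE_mp, intro AE_I2 impI)
    fix x
    assume dev: "\<forall>m. eventually (\<lambda>t. \<bar>(\<Sum>i\<in>J t. X i x) - real t * \<mu>\<bar>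
        < inverse (real (Suc m)) * real t) sequentially"
    show "((\<lambda>t. (\<Sum>i\<in>J t. X i x) / real t) \<longlongrightarrow> \<mu>) sequentially"
    proof (rule tendstoI)
      fix e :: real assume "0 < e"
      then obtain m where m: "inverse (real (Suc m)) < e"
        using reals_Archimedean by blast
      have "\<bar>(\<Sum>i\<in>J t. X i x) / real t - \<mu>\<bar> < e"
        if close: "\<bar>(\<Sum>i\<in>J t. X i x) - real t * \<mu>\<bar> < inverse (real (Suc m)) * real t" for t
      proof -
        have "0 < real t"
          using close by (cases "t = 0") auto
        then have "(\<Sum>i\<in>J t. X i x) / real t - \<mu> = ((\<Sum>i\<in>J t. X i x) - real t * \<mu>) / real t"
          by (simp add: diff_divide_distrib)
        then have "\<bar>(\<Sum>i\<in>J t. X i x) / real t - \<mu>\<bar> = \<bar>(\<Sum>i\<in>J t. X i x) - real t * \<mu>\<bar> / real t"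
          using \<open>0 < real t\<close> by simp
        also have "\<dots> < inverse (real (Suc m))"
          using close \<open>0 < real t\<close> by (simp add: divide_less_eq)
        finally show ?thesis
          using m by linarith
      qed
      then show "eventually (\<lambda>t. dist ((\<Sum>i\<in>J t. X i x) / real t) \<mu> < e) sequentially"
        using dev[rule_format, of m] by (auto simp: dist_real_def elim: eventually_mono)
    qed
  qed
qed

lemma (in prob_space) expectation_finite_valued:
  fixes g :: "'s \<Rightarrow> real"
  assumes Y: "random_variable (count_space S) Y" and "finite S"
  shows "expectation (\<lambda>x. g (Y x)) = (\<Sum>w\<in>S. prob {x \<in> space M. Y x = w} * g w)"
proof -
  define A where "A w = {x \<in> space M. Y x = w}" for w
  have Y_in: "Y x \<in> S" if "x \<in> space M" for x
    using measurable_space[OF Y that] by simp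
  have A_events: "A w \<in> events" for w
  proof -
    have "Y -` ({w} \<inter> S) \<inter> space M \<in> events"
      using Y by (intro measurable_sets) auto
    moreover have "Y -` ({w} \<inter> S) \<inter> space M = A w"
      unfolding A_def using Y_in by auto
    ultimately show ?thesis
      by simp
  qed
  have "g (Y x) = (\<Sum>w\<in>S. g w * indicator (A w) x)" if "x \<in> space M" for x
  proof -
    have "(\<Sum>w\<in>S. g w * indicator (A w) x) = (\<Sum>w\<in>{Y x}. g w * indicator (A w) x)"
      using Y_in[OF that] \<open>finite S\<close> by (intro sum.mono_neutral_right) (auto simp: A_def indicator_def)
    then show ?thesis
      using that by (simp add: A_def)
  qed
  then have "expectation (\<lambda>x. g (Y x)) = expectation (\<lambda>x. \<Sum>w\<in>S. g w * indicator (A w) x)"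
    by (rule Bochner_Integration.integral_cong[OF refl])
  also have "\<dots> = (\<Sum>w\<in>S. g w * prob (A w))"
    using A_events by (simp add: Bochner_Integration.integral_sum integrable_real_indicator
        emeasure_eq_measure sets.Int_space_eq2)
  finally show ?thesis
    unfolding A_def by (simp add: mult.commute)
qed

lemma ln_prod_divide_prod:
  fixes p q :: "'a \<Rightarrow> real"
  assumes "finite A" and pos: "\<forall>x\<in>A. 0 < p x \<and> 0 < q x"
  shows "ln ((\<Prod>x\<in>A. p x) / (\<Prod>x\<in>A. q x)) = (\<Sum>x\<in>A. ln (p x / q x))"
proof -
  have "ln ((\<Prod>x\<in>A. p x) / (\<Prod>x\<in>A. q x)) = ln (\<Prod>x\<in>A. p x) - ln (\<Prod>x\<in>A. q x)"
    using pos by (intro ln_divide_pos prod_pos) auto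
  also have "\<dots> = (\<Sum>x\<in>A. ln (p x)) - (\<Sum>x\<in>A. ln (q x))"
    using \<open>finite A\<close> pos by (simp add: ln_prod less_imp_neq[symmetric])
  also have "\<dots> = (\<Sum>x\<in>A. ln (p x / q x))"
    using pos by (simp add: ln_divide_pos sum_subtractf)
  finally show ?thesis .
qed

lemma ln_inverse_divide: "ln (b / a) = - ln (a / b)" for a b :: real
  by (metis inverse_divide ln_inverse)

lemma (in prob_space) AE_log_likelihood_ratio_rate:
  fixes sig :: "nat \<Rightarrow> 'j \<Rightarrow> 'a \<Rightarrow> 's" and p q :: "'s \<Rightarrow> real"
  assumes indep: "indep_vars (\<lambda>ti. count_space (S (snd ti))) (\<lambda>ti. sig (fst ti) (snd ti)) ({1..} \<times> V)"
    and j: "j \<in> V" and "finite (S j)" and "S j \<noteq> {}"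
    and pos: "\<forall>w\<in>S j. 0 < p w \<and> 0 < q w"
    and distr: "\<forall>k\<ge>1. \<forall>w\<in>S j. prob {\<omega> \<in> space M. sig k j \<omega> = w} = p w"
  shows "AE \<omega> in M. ((\<lambda>t. ln ((\<Prod>k=1..t. p (sig k j \<omega>)) / (\<Prod>k=1..t. q (sig k j \<omega>))) / real t)
           \<longlongrightarrow> KL (S j) p q) sequentially"
proof -
  define g where "g w = ln (p w / q w)" for w
  define X where "X ti \<omega> = g (sig (fst ti) (snd ti) \<omega>)" for ti \<omega>
  have rv: "random_variable (count_space (S j)) (sig k j)" if "1 \<le> k" for k
    using indep j that unfolding indep_vars_def2 by force
  have sig_in: "sig k j \<omega> \<in> S j" if "1 \<le> k" "\<omega> \<in> space M" for k \<omega>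
    using measurable_space[OF rv that(2)] that(1) by simp
  define lo where "lo = Min (g ` S j)"
  define hi where "hi = Max (g ` S j) + 1"
  have g_bounds: "lo \<le> g w \<and> g w < hi" if "w \<in> S j" for w
  proof -
    have "lo \<le> g w" "g w \<le> Max (g ` S j)"
      unfolding lo_def using \<open>finite (S j)\<close> that by (auto intro: Min_le Max_ge)
    then show ?thesis
      unfolding hi_def by simp
  qed
  obtain w where "w \<in> S j"
    using \<open>S j \<noteq> {}\<close> by blast
  then have "lo < hi"
    using g_bounds by fastforce
  have "indep_vars (\<lambda>_. borel) (\<lambda>ti \<omega>. g (sig (fst ti) (snd ti) \<omega>)) ({1..} \<times> V)"
    by (rule indep_vars_compose2[OF indep]) simp
  then have indep_X: "indep_vars (\<lambda>_. borel) X ({1..} \<times> {j})"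
    unfolding X_def by (rule indep_vars_subset) (use j in blast)
  have bounded: "AE \<omega> in M. X i \<omega> \<in> {lo..hi}" if "i \<in> {1..} \<times> {j}" for i
  proof (rule AE_I2)
    fix \<omega> assume "\<omega> \<in> space M"
    then show "X i \<omega> \<in> {lo..hi}"
      using that sig_in g_bounds unfolding X_def by fastforce
  qed
  have mean: "expectation (X i) = KL (S j) p q" if "i \<in> {1..} \<times> {j}" for i
  proof -
    have "expectation (X i) = (\<Sum>w\<in>S j. prob {\<omega> \<in> space M. sig (fst i) j \<omega> = w} * g w)"
      using that expectation_finite_valued[OF rv \<open>finite (S j)\<close>, of "fst i" g] unfolding X_def by auto
    also have "\<dots> = KL (S j) p q"
      using that distr unfolding KL_def g_def by (auto intro!: sum.cong)
    finally show ?thesis .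
  qed
  have "AE \<omega> in M. ((\<lambda>t. (\<Sum>i\<in>{1..t} \<times> {j}. X i \<omega>) / real t) \<longlongrightarrow> KL (S j) p q) sequentially"
    by (rule AE_sum_div_tendsto_mean[OF indep_X _ _ _ bounded \<open>lo < hi\<close> mean]) auto
  then show ?thesis
  proof (rule AE_mp, intro AE_I2 impI)
    fix \<omega> assume "\<omega> \<in> space M"
    have "(\<Sum>i\<in>{1..t} \<times> {j}. X i \<omega>) = ln ((\<Prod>k=1..t. p (sig k j \<omega>)) / (\<Prod>k=1..t. q (sig k j \<omega>)))"
      for t
    proof -
      have "{1..t} \<times> {j} = (\<lambda>k. (k, j)) ` {1..t}"
        by auto
      then have "(\<Sum>i\<in>{1..t} \<times> {j}. X i \<omega>) = (\<Sum>k=1..t. g (sig k j \<omega>))"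
        unfolding X_def by (simp add: sum.reindex inj_on_def)
      also have "\<dots> = ln ((\<Prod>k=1..t. p (sig k j \<omega>)) / (\<Prod>k=1..t. q (sig k j \<omega>)))"
        unfolding g_def using pos sig_in \<open>\<omega> \<in> space M\<close> by (intro ln_prod_divide_prod[symmetric]) auto
      finally show ?thesis .
    qed
    then show "((\<lambda>t. (\<Sum>i\<in>{1..t} \<times> {j}. X i \<omega>) / real t) \<longlongrightarrow> KL (S j) p q) sequentially \<Longrightarrow>
        ((\<lambda>t. ln ((\<Prod>k=1..t. p (sig k j \<omega>)) / (\<Prod>k=1..t. q (sig k j \<omega>))) / real t)
          \<longlongrightarrow> KL (S j) p q) sequentially"
      by simp
  qed
qed

theorem theorem8:
  fixes n f :: nat
    and E :: "(nat \<times> nat) set"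
    and F :: "nat set"
    and \<Theta> :: "'h set" and \<theta>s :: 'h
    and S :: "nat \<Rightarrow> 's set"
    and lik :: "nat \<Rightarrow> 's \<Rightarrow> 'h \<Rightarrow> real"
    and M :: "'w measure"
    and sig :: "nat \<Rightarrow> nat \<Rightarrow> 'w \<Rightarrow> 's"
    and adv :: "'w \<Rightarrow> nat \<Rightarrow> nat \<Rightarrow> nat \<Rightarrow> 'h \<Rightarrow> 'h \<Rightarrow> real"
  defines "V \<equiv> {..<n}"
  assumes E_sub: "E \<subseteq> V \<times> V"
    and E_irrefl: "\<forall>i. (i, i) \<notin> E"
    and F_sub: "F \<subseteq> V" and F_card: "card F \<le> f"
    and Theta_fin: "finite \<Theta>" and theta_star: "\<theta>s \<in> \<Theta>"
    and S_fin: "\<forall>i\<in>V. finite (S i) \<and> S i \<noteq> {}"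
    and l_pos: "\<forall>i\<in>V. \<forall>w\<in>S i. \<forall>\<theta>\<in>\<Theta>. lik i w \<theta> > 0"
    and l_sum: "\<forall>i\<in>V. \<forall>\<theta>\<in>\<Theta>. (\<Sum>w\<in>S i. lik i w \<theta>) = 1"
    and M_prob: "prob_space M"
    and sig_indep: "prob_space.indep_vars M (\<lambda>ti. count_space (S (snd ti)))
                      (\<lambda>ti. sig (fst ti) (snd ti)) ({1..} \<times> V)"
    and sig_distr: "\<forall>t\<ge>1. \<forall>i\<in>V. \<forall>w\<in>S i.
                      measure M {\<omega> \<in> space M. sig t i \<omega> = w} = lik i w \<theta>s"
    and one_source: "\<forall>N EH. reduced_graph1 V E f N EH \<longrightarrow>
                      (\<exists>!C. source_component N EH C)"
    and identifiable: "\<forall>\<theta>\<in>\<Theta>. \<theta> \<noteq> \<theta>s \<longrightarrow> (\<forall>N EH C.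
                      reduced_graph1 V E f N EH \<and> source_component N EH C \<longrightarrow>
                      (\<Sum>j\<in>C. KL (S j) (\<lambda>w. lik j w \<theta>s) (\<lambda>w. lik j w \<theta>)) \<noteq> 0)"
  shows "\<forall>i\<in>V - F. \<forall>\<theta>\<in>\<Theta>. \<theta> \<noteq> \<theta>s \<longrightarrow>
           (AE \<omega> in M.
              let r = pl E F f (adv \<omega>)
                        (\<lambda>t j a b. ln ((\<Prod>k=1..t. lik j (sig k j \<omega>) a)
                                       / (\<Prod>k=1..t. lik j (sig k j \<omega>) b)))
              in filterlim (\<lambda>t. r t i \<theta>s \<theta>) at_top sequentially \<and>
                 filterlim (\<lambda>t. r t i \<theta> \<theta>s) at_bot sequentially)"
proof (intro ballI impI)
  fix i \<theta> assume i: "i \<in> V - F" and \<theta>: "\<theta> \<in> \<Theta>" "\<theta> \<noteq> \<theta>s"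
  interpret prob_space M
    by (rule M_prob)
  define K where "K j = KL (S j) (\<lambda>w. lik j w \<theta>s) (\<lambda>w. lik j w \<theta>)" for j
  have K_nonneg: "\<forall>j\<in>V. 0 \<le> K j"
    unfolding K_def using S_fin l_pos l_sum \<theta> theta_star by (blast intro: KL_nonneg)
  have ident: "\<forall>N EH C. reduced_graph1 V E f N EH \<and> source_component N EH C \<longrightarrow> (\<Sum>j\<in>C. K j) \<noteq> 0"
    using identifiable \<theta> unfolding K_def by blast
  have "AE \<omega> in M. \<forall>j\<in>V - F. ((\<lambda>t. ln ((\<Prod>k=1..t. lik j (sig k j \<omega>) \<theta>s)
      / (\<Prod>k=1..t. lik j (sig k j \<omega>) \<theta>)) / real t) \<longlongrightarrow> K j) sequentially"
    (is "AE \<omega> in M. \<forall>j\<in>V - F. ?rate \<omega> j")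
  proof (rule AE_finite_allI)
    show "AE \<omega> in M. ?rate \<omega> j" if "j \<in> V - F" for j
      unfolding K_def using that S_fin l_pos \<theta> theta_star sig_distr
      by (intro AE_log_likelihood_ratio_rate[OF sig_indep]) auto
  qed (simp add: V_def)
  then show "AE \<omega> in M. let r = pl E F f (adv \<omega>)
        (\<lambda>t j a b. ln ((\<Prod>k=1..t. lik j (sig k j \<omega>) a) / (\<Prod>k=1..t. lik j (sig k j \<omega>) b)))
      in filterlim (\<lambda>t. r t i \<theta>s \<theta>) at_top sequentially \<and> filterlim (\<lambda>t. r t i \<theta> \<theta>s) at_bot sequentially"
  proof (rule AE_mp, intro AE_I2 impI)
    fix \<omega> assume "\<forall>j\<in>V - F. ?rate \<omega> j"
    from pl_tendsto_if_log_ratio_rates[where a = \<theta>s and b = \<theta> and adv = "adv \<omega>"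
        and L = "\<lambda>t j a b. ln ((\<Prod>k=1..t. lik j (sig k j \<omega>) a) / (\<Prod>k=1..t. lik j (sig k j \<omega>) b))",
        OF E_sub[unfolded V_def] E_irrefl F_sub[unfolded V_def] F_card
        ident[unfolded V_def] K_nonneg[unfolded V_def] this[unfolded V_def] ln_inverse_divide
        i[unfolded V_def]]
    show "let r = pl E F f (adv \<omega>)
          (\<lambda>t j a b. ln ((\<Prod>k=1..t. lik j (sig k j \<omega>) a) / (\<Prod>k=1..t. lik j (sig k j \<omega>) b)))
        in filterlim (\<lambda>t. r t i \<theta>s \<theta>) at_top sequentially \<and> filterlim (\<lambda>t. r t i \<theta> \<theta>s) at_bot sequentially"
      unfolding Let_def by blast
  qed
qed

end
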